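(* In the setting below, consider any maximal collection of pairwise disjoint $(\ell+1)$-cycles in $X_1\times\dots\times X_\ell\times Y$ (i.e. tuples $(x_1,\dots,x_\ell,y)$ with $x_i\in X_i$, $y\in Y$, $x_1+\dots+x_\ell+y=0$, pairwise differing in every coordinate), and let $t$ be its size. Then $t\geq\frac{r}{2k\theta}N$.
   Context: Let $p$ be a fixed prime, $n\geq1$, $N=p^n$, $[m]=\{1,\dots,m\}$. For sets $X_1,\dots,X_k\subseteq\mathbb{F}_p^n$, a $k$-cycle is a tuple $(x_1,\dots,x_k)\in X_1\times\dots\times X_k$ with $x_1+\dots+x_k=0$; two cycles are disjoint if they differ in every coordinate. Setting: $k\geq4$, $X_1,\dots,X_k\subseteq\mathbb{F}_p^n$, the number of $k$-cycles in $X_1\times\dots\times X_k$ equals $\delta'N^{k-1}$ with $\delta'>0$, and $\theta\geq 1$ is such that for each $i\in[k]$ every point of $X_i$ occurs as $x_i$ in at most $\theta\delta'N^{k-2}$ $k$-cycles. Put $\alpha=(\theta\delta')^{1/(k-2)}$. For $I\subseteq[k]$ with $1\leq|I|\leq k-2$, an $I$-tuple $(x_i)_{i\in I}\in\prod_{i\in I}X_i$ is bad if at least $2\alpha^{k-|I|-1}N^{k-|I|-1}$ $k$-cycles in $X_1\times\dots\times X_k$ have their $I$-coordinates equal to it. Let $2\leq\ell\leq k-2$ and $0<r<1$. Let $M$ be a collection of $k$-cycles with $|M|\geq r\delta'N^{k-1}$ such that (i) every $(x_1,\dots,x_\ell)\in X_1\times\dots\times X_\ell$ extends to at most $2\alpha^{k-\ell-1}N^{k-\ell-1}$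 $k$-cycles in $M$, and (ii) for every $(x_1,\dots,x_k)\in M$ the $\{\ell+1,\dots,k\}$-tuple $(x_{\ell+1},\dots,x_k)$ is not bad. Let $Y$ be the set of $y\in\mathbb{F}_p^n$ such that the equation $x_1+\dots+x_\ell=-y$ has at most $2\alpha^{\ell-1}N^{\ell-1}$ solutions $(x_1,\dots,x_\ell)\in X_1\times\dots\times X_\ell$. *)

theory Defs
  imports Complex_Main "HOL-Computational_Algebra.Primes"
begin

text \<open>The ambient group F_p^n is modelled as a finite abelian group type 'a of
  exponent p (every element x satisfies x + ... + x (p times) = 0) with CARD('a) = p^n;
  such a group is isomorphic to F_p^n.\<close>

definition exponent_divides :: "nat \<Rightarrow> 'a::ab_group_add itself \<Rightarrow> bool" where
  "exponent_divides p _ \<longleftrightarrow> (\<forall>x::'a. (\<Sum>i<p. x) = 0)"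

definition tuples :: "nat \<Rightarrow> (nat \<Rightarrow> 'a::ab_group_add set) \<Rightarrow> (nat \<Rightarrow> 'a) set" where
  "tuples m X = {x. (\<forall>i\<in>{1..m}. x i \<in> X i) \<and> (\<forall>i. i \<notin> {1..m} \<longrightarrow> x i = 0)}"

definition cycles :: "nat \<Rightarrow> (nat \<Rightarrow> 'a::ab_group_add set) \<Rightarrow> (nat \<Rightarrow> 'a) set" where
  "cycles m X = {x \<in> tuples m X. (\<Sum>i=1..m. x i) = 0}"

definition pairwise_disjoint :: "nat \<Rightarrow> (nat \<Rightarrow> 'a) set \<Rightarrow> bool" where
  "pairwise_disjoint m C \<longleftrightarrow> (\<forall>c\<in>C. \<forall>d\<in>C. c \<noteq> d \<longrightarrow> (\<forall>i\<in>{1..m}. c i \<noteq> d i))"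

definition maximal_disjoint_cycles ::
  "nat \<Rightarrow> (nat \<Rightarrow> 'a::ab_group_add set) \<Rightarrow> (nat \<Rightarrow> 'a) set \<Rightarrow> bool" where
  "maximal_disjoint_cycles m X C \<longleftrightarrow>
     C \<subseteq> cycles m X \<and> pairwise_disjoint m C \<and>
     (\<forall>D. C \<subset> D \<and> D \<subseteq> cycles m X \<longrightarrow> \<not> pairwise_disjoint m D)"

definition bad :: "nat \<Rightarrow> (nat \<Rightarrow> 'a::ab_group_add set) \<Rightarrow> real \<Rightarrow> real \<Rightarrow> nat set \<Rightarrow> (nat \<Rightarrow> 'a) \<Rightarrow> bool" where
  "bad k X \<alpha> N I y \<longleftrightarrow> (\<forall>i\<in>I. y i \<in> X i) \<and>
     real (card {c \<in> cycles k X. \<forall>i\<in>I. c i = y i}) \<ge> 2 * \<alpha> ^ (k - card I - 1) * N ^ (k - card I - 1)"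

end

theory Submission
  imports Defs "HOL-Library.FuncSet"
begin

text \<open>Collapsing a cycle c of M to (c_1, ..., c_l, c_(l+1) + ... + c_k) gives an (l+1)-cycle
  with last coordinate in Y: the solutions of x_1 + ... + x_l = -y extend injectively to k-cycles
  with the tail of c, and that tail is not bad. By maximality of C every collapsed cycle meets some
  d in C in some coordinate. At most theta delta' N^(k-2) cycles meet d in a coordinate i <= l, and
  at most 2 alpha^(l-1) N^(l-1) * 2 alpha^(k-l-1) N^(k-l-1) = 4 theta delta' N^(k-2) in the last
  one, because each solution (x_1, ..., x_l) extends to few cycles of M. Hence
  r delta' N^(k-1) <= |M| <= (l+4) |C| theta delta' N^(k-2) <= 2k |C| theta delta' N^(k-2).\<close>

lemma finite_tuples: "finite (tuples m (X :: nat \<Rightarrow> 'a::{ab_group_add,finite} set))"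
proof -
  let ?pad = "\<lambda>g i. if i \<in> {1..m} then g i else (0::'a)"
  have "tuples m X \<subseteq> ?pad ` ({1..m} \<rightarrow>\<^sub>E UNIV)"
  proof
    fix x assume "x \<in> tuples m X"
    then have "x = ?pad (restrict x {1..m})"
      by (auto simp: tuples_def fun_eq_iff)
    then show "x \<in> ?pad ` ({1..m} \<rightarrow>\<^sub>E UNIV)"
      by (rule image_eqI[where x = "restrict x {1..m}"]) simp_all
  qed
  then show ?thesis by (rule finite_subset) (simp add: finite_PiE)
qed

lemma finite_cycles: "finite (cycles m (X :: nat \<Rightarrow> 'a::{ab_group_add,finite} set))"
  using finite_tuples by (rule finite_subset[rotated]) (auto simp: cycles_def)

lemma sum_atLeastAtMost_split:
  fixes m l k :: nat
  assumes "m \<le> l + 1" "l \<le> k"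
  shows "sum f {m..k} = sum f {m..l} + sum f {l+1..k}"
proof -
  have "{m..k} = {m..l} \<union> {l+1..k}" using assms by auto
  then show ?thesis by (simp add: sum.union_disjoint)
qed

lemma cycle_head_sum_eq_neg_tail_sum:
  assumes "c \<in> cycles k X" "l \<le> k"
  shows "(\<Sum>i=1..l. c i) = - (\<Sum>i=l+1..k. c i)"
  using assms sum_atLeastAtMost_split[of 1 l k c]
  by (simp add: cycles_def eq_neg_iff_add_eq_0)

definition sum_fibre :: "nat \<Rightarrow> (nat \<Rightarrow> 'a::ab_group_add set) \<Rightarrow> 'a \<Rightarrow> (nat \<Rightarrow> 'a) set" where
  "sum_fibre l X y = {x \<in> tuples l X. (\<Sum>i=1..l. x i) = - y}"

definition collapse_tail :: "nat \<Rightarrow> nat \<Rightarrow> (nat \<Rightarrow> 'a::comm_monoid_add) \<Rightarrow> nat \<Rightarrow> 'a" where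
  "collapse_tail l k c =
     (\<lambda>i. if i \<in> {1..l} then c i else if i = l + 1 then (\<Sum>j=l+1..k. c j) else 0)"

lemma collapse_tail_in_cycles:
  assumes "c \<in> cycles k X" "l \<le> k" "(\<Sum>j=l+1..k. c j) \<in> Y"
  shows "collapse_tail l k c \<in> cycles (l + 1) (X(l + 1 := Y))"
proof -
  have "(\<Sum>i=1..l. collapse_tail l k c i) = (\<Sum>i=1..l. c i)"
    by (rule sum.cong) (auto simp: collapse_tail_def)
  then have "(\<Sum>i=1..l+1. collapse_tail l k c i) = 0"
    using cycle_head_sum_eq_neg_tail_sum[OF assms(1,2)] by (simp add: collapse_tail_def)
  moreover have "collapse_tail l k c \<in> tuples (l + 1) (X(l + 1 := Y))"
    using assms by (auto simp: collapse_tail_def tuples_def cycles_def)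
  ultimately show ?thesis by (simp add: cycles_def)
qed

lemma card_sum_fibre_le_card_tail_fibre:
  fixes X :: "nat \<Rightarrow> 'a::{ab_group_add,finite} set"
  assumes "l \<le> k" and tail: "\<forall>i\<in>{l+1..k}. c i \<in> X i"
  shows "card (sum_fibre l X (\<Sum>i=l+1..k. c i))
      \<le> card {d \<in> cycles k X. \<forall>i\<in>{l+1..k}. d i = c i}"
    (is "card ?T \<le> card ?S")
proof -
  let ?head = "\<lambda>d i. if i \<in> {1..l} then d i else 0"
  let ?glue = "\<lambda>x i. if i \<in> {1..l} then x i else if i \<in> {l+1..k} then c i else 0"
  have "?T \<subseteq> ?head ` ?S"
  proof
    fix x assume x: "x \<in> ?T"
    have "(\<Sum>i=1..l. ?glue x i) = (\<Sum>i=1..l. x i)" "(\<Sum>i=l+1..k. ?glue x i) = (\<Sum>i=l+1..k. c i)"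
      by (auto intro: sum.cong)
    then have "(\<Sum>i=1..k. ?glue x i) = 0"
      using x sum_atLeastAtMost_split[of 1 l k "?glue x"] \<open>l \<le> k\<close> by (simp add: sum_fibre_def)
    then have "?glue x \<in> ?S"
      using x tail \<open>l \<le> k\<close> by (auto simp: sum_fibre_def cycles_def tuples_def)
    moreover have "x = ?head (?glue x)"
      using x \<open>l \<le> k\<close> by (auto simp: sum_fibre_def tuples_def fun_eq_iff)
    ultimately show "x \<in> ?head ` ?S" by (simp add: image_eqI)
  qed
  then have "card ?T \<le> card (?head ` ?S)"
    by (rule card_mono[OF finite_imageI, rotated]) (simp add: finite_cycles)
  also have "\<dots> \<le> card ?S"
    by (rule card_image_le) (simp add: finite_cycles)
  finally show ?thesis .
qed

lemma collapse_tail_in_cycles_if_not_bad: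
  fixes X :: "nat \<Rightarrow> 'a::{ab_group_add,finite} set"
  assumes "c \<in> cycles k X" "l < k" "\<not> bad k X \<alpha> N {l+1..k} c"
  shows "collapse_tail l k c \<in> cycles (l + 1)
      (X(l + 1 := {y. real (card (sum_fibre l X y)) \<le> 2 * \<alpha> ^ (l - 1) * N ^ (l - 1)}))"
proof (rule collapse_tail_in_cycles)
  have tail: "\<forall>i\<in>{l+1..k}. c i \<in> X i"
    using assms(1,2) by (auto simp: cycles_def tuples_def)
  have "card {l+1..k} = k - l" by simp
  then have "real (card {d \<in> cycles k X. \<forall>i\<in>{l+1..k}. d i = c i}) < 2 * \<alpha> ^ (l - 1) * N ^ (l - 1)"
    using assms(2,3) tail by (auto simp: bad_def)
  then show "(\<Sum>j=l+1..k. c j) \<in> {y. real (card (sum_fibre l X y)) \<le> 2 * \<alpha> ^ (l - 1) * N ^ (l - 1)}"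
    using card_sum_fibre_le_card_tail_fibre[of l k c X] assms(2) tail by simp
qed (use assms in auto)

lemma pairwise_disjoint_insert:
  "pairwise_disjoint m (insert z C) \<longleftrightarrow>
     pairwise_disjoint m C \<and> (\<forall>d\<in>C. d \<noteq> z \<longrightarrow> (\<forall>i\<in>{1..m}. d i \<noteq> z i))"
  unfolding pairwise_disjoint_def by (auto simp: eq_commute[of "z _"])

lemma maximal_disjoint_cycles_meets:
  assumes "maximal_disjoint_cycles m X C" "z \<in> cycles m X" "1 \<le> m"
  shows "\<exists>d\<in>C. \<exists>i\<in>{1..m}. d i = z i"
proof (rule ccontr)
  assume miss: "\<not> ?thesis"
  then have "z \<notin> C" using \<open>1 \<le> m\<close> by fastforce
  then have "C \<subset> insert z C" by auto
  moreover have "pairwise_disjoint m (insert z C)"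
    using assms(1) miss by (auto simp: pairwise_disjoint_insert maximal_disjoint_cycles_def)
  ultimately show False
    using assms(1,2) unfolding maximal_disjoint_cycles_def by blast
qed

lemma card_le_sum_card_fibres:
  assumes "finite A" "finite D" "finite I" "\<forall>a\<in>A. \<exists>d\<in>D. \<exists>i\<in>I. P d i a"
  shows "card A \<le> (\<Sum>d\<in>D. \<Sum>i\<in>I. card {a\<in>A. P d i a})"
proof -
  have "card A = card (\<Union>d\<in>D. \<Union>i\<in>I. {a\<in>A. P d i a})"
    using assms(4) by (intro arg_cong[where f = card]) blast
  also have "\<dots> \<le> (\<Sum>d\<in>D. card (\<Union>i\<in>I. {a\<in>A. P d i a}))"
    by (rule card_UN_le[OF assms(2)])
  also have "\<dots> \<le> (\<Sum>d\<in>D. \<Sum>i\<in>I. card {a\<in>A. P d i a})"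
    by (intro sum_mono card_UN_le assms(3))
  finally show ?thesis .
qed

lemma card_tail_sum_fibre_le:
  fixes X :: "nat \<Rightarrow> 'a::{ab_group_add,finite} set" and a b :: real
  assumes "M \<subseteq> cycles k X" "l \<le> k"
    and "real (card (sum_fibre l X y)) \<le> a"
    and "\<forall>x\<in>tuples l X. real (card {c\<in>M. \<forall>i\<in>{1..l}. c i = x i}) \<le> b" "0 \<le> b"
  shows "real (card {c\<in>M. (\<Sum>j=l+1..k. c j) = y}) \<le> a * b"
proof -
  let ?T = "sum_fibre l X y"
  have finite: "finite M" "finite ?T"
    using finite_subset[OF assms(1) finite_cycles] finite_tuples[of l X]
    by (simp_all add: sum_fibre_def)
  have cover: "{c\<in>M. (\<Sum>j=l+1..k. c j) = y} \<subseteq> (\<Union>x\<in>?T. {c\<in>M. \<forall>i\<in>{1..l}. c i = x i})"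
  proof
    fix c assume c: "c \<in> {c\<in>M. (\<Sum>j=l+1..k. c j) = y}"
    let ?x = "\<lambda>i. if i \<in> {1..l} then c i else 0"
    have "(\<Sum>i=1..l. ?x i) = (\<Sum>i=1..l. c i)" by (rule sum.cong) auto
    then have "?x \<in> ?T"
      using c assms(1,2) cycle_head_sum_eq_neg_tail_sum[of c k X l]
      by (auto simp: sum_fibre_def tuples_def cycles_def)
    then show "c \<in> (\<Union>x\<in>?T. {c\<in>M. \<forall>i\<in>{1..l}. c i = x i})"
      by (rule UN_I) (use c in simp)
  qed
  have "card {c\<in>M. (\<Sum>j=l+1..k. c j) = y} \<le> card (\<Union>x\<in>?T. {c\<in>M. \<forall>i\<in>{1..l}. c i = x i})"
    by (rule card_mono[OF _ cover]) (use finite in auto)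
  also have "\<dots> \<le> (\<Sum>x\<in>?T. card {c\<in>M. \<forall>i\<in>{1..l}. c i = x i})"
    by (rule card_UN_le[OF finite(2)])
  finally have "card {c\<in>M. (\<Sum>j=l+1..k. c j) = y} \<le> (\<Sum>x\<in>?T. card {c\<in>M. \<forall>i\<in>{1..l}. c i = x i})" .
  then have "real (card {c\<in>M. (\<Sum>j=l+1..k. c j) = y})
               \<le> (\<Sum>x\<in>?T. real (card {c\<in>M. \<forall>i\<in>{1..l}. c i = x i}))"
    by (simp only: of_nat_sum[symmetric] of_nat_le_iff)
  also have "\<dots> \<le> (\<Sum>x\<in>?T. b)"
    by (rule sum_mono) (use assms(4) in \<open>simp add: sum_fibre_def\<close>)
  also have "\<dots> = real (card ?T) * b" by simp
  also have "\<dots> \<le> a * b" by (rule mult_right_mono) (use assms(3,5) in auto)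
  finally show ?thesis .
qed

text \<open>In the next two lemmas (alpha N)^(k-2) stands for theta delta' N^(k-2),
  since alpha^(k-2) = theta delta'.\<close>

lemma sum_card_collapse_tail_fibres_le:
  fixes X :: "nat \<Rightarrow> 'a::{ab_group_add,finite} set" and \<alpha> N :: real
  assumes "1 \<le> l" "l < k" "0 \<le> \<alpha>" "0 \<le> N"
    and point_deg: "\<forall>i\<in>{1..l}. \<forall>a\<in>X i. real (card {c \<in> cycles k X. c i = a}) \<le> (\<alpha> * N) ^ (k - 2)"
    and M: "M \<subseteq> cycles k X"
    and head_deg: "\<forall>x\<in>tuples l X.
      real (card {c \<in> M. \<forall>i\<in>{1..l}. c i = x i}) \<le> 2 * \<alpha> ^ (k - l - 1) * N ^ (k - l - 1)"
    and d: "d \<in> cycles (l + 1)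
      (X(l + 1 := {y. real (card (sum_fibre l X y)) \<le> 2 * \<alpha> ^ (l - 1) * N ^ (l - 1)}))"
  shows "(\<Sum>i=1..l+1. real (card {c \<in> M. d i = collapse_tail l k c i}))
      \<le> real (l + 4) * (\<alpha> * N) ^ (k - 2)"
proof -
  have head: "real (card {c \<in> M. d i = collapse_tail l k c i}) \<le> (\<alpha> * N) ^ (k - 2)"
    if i: "i \<in> {1..l}" for i
  proof -
    have "{c \<in> M. d i = collapse_tail l k c i} \<subseteq> {c \<in> cycles k X. c i = d i}"
      using M i by (auto simp: collapse_tail_def)
    then have "card {c \<in> M. d i = collapse_tail l k c i} \<le> card {c \<in> cycles k X. c i = d i}"
      by (rule card_mono[rotated]) (simp add: finite_cycles)
    moreover have "d i \<in> X i"
      using d i by (auto simp: cycles_def tuples_def dest!: bspec[of _ _ i])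
    ultimately show ?thesis
      using point_deg i of_nat_le_iff order_trans by blast
  qed
  have tail_eq: "{c \<in> M. d (l + 1) = collapse_tail l k c (l + 1)}
      = {c \<in> M. (\<Sum>j=l+1..k. c j) = d (l + 1)}"
    by (auto simp: collapse_tail_def)
  have fibre: "real (card (sum_fibre l X (d (l + 1)))) \<le> 2 * \<alpha> ^ (l - 1) * N ^ (l - 1)"
    using d by (auto simp: cycles_def tuples_def dest!: bspec[of _ _ "l + 1"])
  have "real (card {c \<in> M. d (l + 1) = collapse_tail l k c (l + 1)})
      \<le> (2 * \<alpha> ^ (l - 1) * N ^ (l - 1)) * (2 * \<alpha> ^ (k - l - 1) * N ^ (k - l - 1))"
    unfolding tail_eq by (rule card_tail_sum_fibre_le[OF M _ fibre head_deg]) (use assms(2-4) in auto)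
  also have "\<dots> = 4 * (\<alpha> * N) ^ (k - 2)"
  proof -
    have "k - 2 = (l - 1) + (k - l - 1)" using assms(1,2) by simp
    then show ?thesis by (simp only:) (simp add: power_add power_mult_distrib algebra_simps)
  qed
  finally have tail:
    "real (card {c \<in> M. d (l + 1) = collapse_tail l k c (l + 1)}) \<le> 4 * (\<alpha> * N) ^ (k - 2)" .
  have "(\<Sum>i=1..l+1. real (card {c \<in> M. d i = collapse_tail l k c i}))
      = (\<Sum>i=1..l. real (card {c \<in> M. d i = collapse_tail l k c i}))
        + real (card {c \<in> M. d (l + 1) = collapse_tail l k c (l + 1)})"
    by simp
  also have "\<dots> \<le> (\<Sum>i=1..l. (\<alpha> * N) ^ (k - 2)) + 4 * (\<alpha> * N) ^ (k - 2)"
    by (intro add_mono sum_mono head tail)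
  also have "\<dots> = real (l + 4) * (\<alpha> * N) ^ (k - 2)" by (simp add: algebra_simps)
  finally show ?thesis .
qed

lemma card_le_card_maximal_disjoint_collapsed_cycles:
  fixes X :: "nat \<Rightarrow> 'a::{ab_group_add,finite} set" and \<alpha> N :: real
  assumes "1 \<le> l" "l < k" "0 \<le> \<alpha>" "0 \<le> N"
    and "\<forall>i\<in>{1..l}. \<forall>a\<in>X i. real (card {c \<in> cycles k X. c i = a}) \<le> (\<alpha> * N) ^ (k - 2)"
    and M: "M \<subseteq> cycles k X"
    and "\<forall>x\<in>tuples l X.
      real (card {c \<in> M. \<forall>i\<in>{1..l}. c i = x i}) \<le> 2 * \<alpha> ^ (k - l - 1) * N ^ (k - l - 1)"
    and not_bad: "\<forall>c\<in>M. \<not> bad k X \<alpha> N {l+1..k} c"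
    and max: "maximal_disjoint_cycles (l + 1)
      (X(l + 1 := {y. real (card (sum_fibre l X y)) \<le> 2 * \<alpha> ^ (l - 1) * N ^ (l - 1)})) C"
  shows "real (card M) \<le> real (l + 4) * real (card C) * (\<alpha> * N) ^ (k - 2)"
proof -
  have C: "C \<subseteq> cycles (l + 1)
      (X(l + 1 := {y. real (card (sum_fibre l X y)) \<le> 2 * \<alpha> ^ (l - 1) * N ^ (l - 1)}))"
    using max by (simp add: maximal_disjoint_cycles_def)
  have finite: "finite M" "finite C"
    using finite_subset[OF M finite_cycles] finite_subset[OF C finite_cycles] .
  have "card M \<le> (\<Sum>d\<in>C. \<Sum>i=1..l+1. card {c \<in> M. d i = collapse_tail l k c i})"
  proof (rule card_le_sum_card_fibres[OF finite])
    show "\<forall>c\<in>M. \<exists>d\<in>C. \<exists>i\<in>{1..l+1}. d i = collapse_tail l k c i"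
    proof
      fix c assume "c \<in> M"
      with M not_bad have "c \<in> cycles k X" "\<not> bad k X \<alpha> N {l+1..k} c" by auto
      from maximal_disjoint_cycles_meets[OF max collapse_tail_in_cycles_if_not_bad[OF this(1) \<open>l < k\<close> this(2)]]
      show "\<exists>d\<in>C. \<exists>i\<in>{1..l+1}. d i = collapse_tail l k c i" by simp
    qed
  qed simp
  then have "real (card M) \<le> (\<Sum>d\<in>C. \<Sum>i=1..l+1. real (card {c \<in> M. d i = collapse_tail l k c i}))"
    by (simp only: of_nat_sum[symmetric] of_nat_le_iff)
  also have "\<dots> \<le> (\<Sum>d\<in>C. real (l + 4) * (\<alpha> * N) ^ (k - 2))"
  proof (rule sum_mono)
    fix d assume "d \<in> C"
    with C show "(\<Sum>i=1..l+1. real (card {c \<in> M. d i = collapse_tail l k c i}))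
        \<le> real (l + 4) * (\<alpha> * N) ^ (k - 2)"
      by (intro sum_card_collapse_tail_fibres_le[OF assms(1-7)]) auto
  qed
  also have "\<dots> = real (l + 4) * real (card C) * (\<alpha> * N) ^ (k - 2)" by simp
  finally show ?thesis .
qed

theorem claim3p4:
  fixes p n k l :: nat and X :: "nat \<Rightarrow> ('a::{ab_group_add,finite}) set"
    and \<theta> r :: real and M C :: "(nat \<Rightarrow> 'a) set"
  assumes "prime p" and "n \<ge> 1" and "card (UNIV :: 'a set) = p ^ n"
    and "exponent_divides p TYPE('a)"
    and "k \<ge> 4"
    and "real (card (cycles k X)) > 0"
    and "\<theta> \<ge> 1"
    and "\<forall>i\<in>{1..k}. \<forall>a\<in>X i.
           real (card {c \<in> cycles k X. c i = a})
             \<le> \<theta> * (real (card (cycles k X)) / real (p ^ n) ^ (k - 1)) * real (p ^ n) ^ (k - 2)"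
    and "2 \<le> l" and "l \<le> k - 2"
    and "0 < r" and "r < 1"
    and "M \<subseteq> cycles k X"
    and "real (card M) \<ge> r * (real (card (cycles k X)) / real (p ^ n) ^ (k - 1)) * real (p ^ n) ^ (k - 1)"
    and "\<forall>y \<in> tuples l X.
           real (card {c \<in> M. \<forall>i\<in>{1..l}. c i = y i})
             \<le> 2 * root (k - 2) (\<theta> * (real (card (cycles k X)) / real (p ^ n) ^ (k - 1))) ^ (k - l - 1)
                 * real (p ^ n) ^ (k - l - 1)"
    and "\<forall>c\<in>M. \<not> bad k X (root (k - 2) (\<theta> * (real (card (cycles k X)) / real (p ^ n) ^ (k - 1))))
                        (real (p ^ n)) {l+1..k} c"
    and "maximal_disjoint_cycles (l + 1)
           (X(l + 1 := {y. real (card {x \<in> tuples l X. (\<Sum>i=1..l. x i) = - y})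
                 \<le> 2 * root (k - 2) (\<theta> * (real (card (cycles k X)) / real (p ^ n) ^ (k - 1))) ^ (l - 1)
                       * real (p ^ n) ^ (l - 1)})) C"
  shows "real (card C) \<ge> r / (2 * real k * \<theta>) * real (p ^ n)"
proof -
  define N where "N = real (p ^ n)"
  define \<delta> where "\<delta> = real (card (cycles k X)) / N ^ (k - 1)"
  define \<alpha> where "\<alpha> = root (k - 2) (\<theta> * \<delta>)"
  have "N > 0" using prime_gt_0_nat[OF assms(1)] by (simp add: N_def)
  then have "\<delta> > 0" using assms(6) by (simp add: \<delta>_def)
  then have "0 \<le> \<alpha>" and \<alpha>_pow: "\<alpha> ^ (k - 2) = \<theta> * \<delta>"
    using assms(5,7) by (simp_all add: \<alpha>_def real_root_pow_pos2)
  have point_deg: "\<forall>i\<in>{1..l}. \<forall>a\<in>X i. real (card {c \<in> cycles k X. c i = a}) \<le> (\<alpha> * N) ^ (k - 2)"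
    using assms(8,10) unfolding power_mult_distrib \<alpha>_pow \<delta>_def N_def by auto
  have head_deg: "\<forall>x\<in>tuples l X.
      real (card {c \<in> M. \<forall>i\<in>{1..l}. c i = x i}) \<le> 2 * \<alpha> ^ (k - l - 1) * N ^ (k - l - 1)"
    using assms(15) unfolding \<alpha>_def \<delta>_def N_def .
  have not_bad: "\<forall>c\<in>M. \<not> bad k X \<alpha> N {l+1..k} c"
    using assms(16) unfolding \<alpha>_def \<delta>_def N_def .
  have max: "maximal_disjoint_cycles (l + 1)
      (X(l + 1 := {y. real (card (sum_fibre l X y)) \<le> 2 * \<alpha> ^ (l - 1) * N ^ (l - 1)})) C"
    using assms(17) unfolding sum_fibre_def \<alpha>_def \<delta>_def N_def .
  have "k - 1 = Suc (k - 2)" using assms(5) by simp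
  then have "(r * N) * (\<delta> * N ^ (k - 2)) \<le> real (card M)"
    using assms(14) unfolding \<delta>_def[symmetric] N_def[symmetric] by (simp add: mult_ac)
  also have "\<dots> \<le> real (l + 4) * real (card C) * (\<alpha> * N) ^ (k - 2)"
    using assms(9,10) \<open>N > 0\<close> \<open>0 \<le> \<alpha>\<close>
    by (intro card_le_card_maximal_disjoint_collapsed_cycles[OF _ _ _ _ point_deg assms(13) head_deg not_bad max])
      auto
  also have "\<dots> = real (l + 4) * real (card C) * (\<theta> * \<delta> * N ^ (k - 2))"
    by (simp add: power_mult_distrib \<alpha>_pow)
  also have "\<dots> \<le> 2 * real k * real (card C) * (\<theta> * \<delta> * N ^ (k - 2))"
    using assms(5,7,10) \<open>N > 0\<close> \<open>\<delta> > 0\<close> by (intro mult_right_mono) auto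
  also have "\<dots> = (2 * real k * \<theta> * real (card C)) * (\<delta> * N ^ (k - 2))"
    by (simp add: mult_ac)
  finally have "r * N \<le> 2 * real k * \<theta> * real (card C)"
    using \<open>N > 0\<close> \<open>\<delta> > 0\<close> by (simp add: mult_le_cancel_right_pos)
  moreover have "2 * real k * \<theta> > 0" using assms(5,7) by simp
  ultimately show ?thesis
    unfolding N_def[symmetric] by (simp add: pos_divide_le_eq mult.commute)
qed

end
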